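(* Let $g \in L^2(\mathbb{R})$ be a non-zero real-valued function with $\|g\|_2 = 1$. Let $\alpha = V_g g(0,1)$ and $$A = \begin{bmatrix} 1 & \alpha \\ \overline{\alpha} & 1 \end{bmatrix}, \qquad u(a,b) = \begin{bmatrix} V_g g(a,b) \\ V_g g(a, b-1)\end{bmatrix}, \qquad F(a,b) = \langle A^{-1} u(a,b), u(a,b)\rangle \quad ((a,b)\in\mathbb{R}^2).$$ Then $F(0,0) = F(0,1) = 1$, and $F(a,b) < 1$ for every $(a,b) \in \mathbb{Z}^2 \setminus \{(0,0),(0,1)\}$; that is, restricted to $\mathbb{Z}^2$, $F$ attains its global maximum value $1$ only at $(0,0)$ and $(0,1)$. Consequently, for every $(a,b) \in \mathbb{Z}^2 \setminus \{(0,0),(0,1)\}$, the functions $g(x)$, $e^{2\pi i x} g(x)$, $e^{2\pi i b x} g(x-a)$ are linearly independent in $L^2(\mathbb{R})$.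
   Context: The short-time Fourier transform of $f \in L^2(\mathbb{R})$ with window $g \in L^2(\mathbb{R})$ is $V_g f(x,y) = \int_{\mathbb{R}} f(t)\overline{g(t-x)} e^{-2\pi i y t}\,dt$. The inner product on $\mathbb{C}^2$ is $\langle v, w\rangle = \sum_j v_j \overline{w_j}$. Here $|\alpha|<1$, so $A$ is invertible (indeed positive definite), and $A$ is the Gramian of $\{g, e^{2\pi i \cdot} g\}$; $F(a,b)\in[0,1]$ for all $(a,b)$. *)

theory Defs
  imports "HOL-Analysis.Analysis"
begin

definition stft :: "(real \<Rightarrow> complex) \<Rightarrow> (real \<Rightarrow> complex) \<Rightarrow> real \<Rightarrow> real \<Rightarrow> complex" where
  "stft g f x y = (\<integral>t. f t * cnj (g (t - x)) * cis (- 2 * pi * y * t) \<partial>lborel)"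

definition cinner2 :: "complex^2 \<Rightarrow> complex^2 \<Rightarrow> complex" where
  "cinner2 v w = (\<Sum>j\<in>UNIV. v $ j * cnj (w $ j))"

definition gramA :: "complex \<Rightarrow> complex^2^2" where
  "gramA \<alpha> = vector [vector [1, \<alpha>], vector [cnj \<alpha>, 1]]"

definition uvec :: "(real \<Rightarrow> real) \<Rightarrow> real \<Rightarrow> real \<Rightarrow> complex^2" where
  "uvec g a b = vector [stft (\<lambda>t. of_real (g t)) (\<lambda>t. of_real (g t)) a b,
                        stft (\<lambda>t. of_real (g t)) (\<lambda>t. of_real (g t)) a (b - 1)]"

definition Ffun :: "(real \<Rightarrow> real) \<Rightarrow> real \<Rightarrow> real \<Rightarrow> complex" where
  "Ffun g a b = (let \<alpha> = stft (\<lambda>t. of_real (g t)) (\<lambda>t. of_real (g t)) 0 1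
                 in cinner2 (matrix_inv (gramA \<alpha>) *v uvec g a b) (uvec g a b))"

end

theory Submission
  imports Defs "HOL-Computational_Algebra.Polynomial"
begin

text \<open>
  Write \<open>M\<^sub>b T\<^sub>a g\<close> for \<open>x \<mapsto> e^(2\<pi>ibx) g(x - a)\<close>. The matrix \<open>A\<close> is the Gram matrix of \<open>g\<close>
  and \<open>M\<^sub>1 g\<close>, and \<open>u(a,b)\<close> lists the inner products of the unit vector \<open>M\<^sub>b T\<^sub>a g\<close> with them; so
  \<open>F(a,b)\<close> is the squared norm of the orthogonal projection of \<open>M\<^sub>b T\<^sub>a g\<close> onto their span, and
  \<open>1 - F(a,b)\<close> is its squared distance from that span. Hence \<open>F(a,b) < 1\<close> follows from the
  linear independence of the three functions, which is shown directly. For \<open>a = 0\<close> a dependence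
  would make a nontrivial trigonometric trinomial vanish wherever \<open>g \<noteq> 0\<close>, but such a trinomial
  has only countably many zeros. For \<open>a \<noteq> 0\<close>, taking moduli gives \<open>g(x - a)\<^sup>2 = \<phi>(x) g(x)\<^sup>2\<close> with
  a \<open>1\<close>-periodic \<open>\<phi>\<close>; iterating, \<open>g(x)\<^sup>2 \<le> g(x - na)\<^sup>2 + g(x + na)\<^sup>2\<close> for every \<open>n\<close>, and
  integrating over a unit interval and summing over \<open>n\<close> shows that an integrable function with
  this property vanishes almost everywhere.
\<close>

lemma cnj_measurable [measurable]:
  assumes [measurable]: "f \<in> borel_measurable M"
  shows "(\<lambda>x. cnj (f x)) \<in> borel_measurable M"
proof -
  have "(\<lambda>x. cnj (f x)) = (\<lambda>x. complex_of_real (Re (f x)) - \<i> * complex_of_real (Im (f x)))"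
    by (auto simp: complex_eq_iff)
  also have "\<dots> \<in> borel_measurable M" by measurable
  finally show ?thesis .
qed

lemma cis_measurable [measurable]:
  "f \<in> borel_measurable M \<Longrightarrow> (\<lambda>x. cis (f x)) \<in> borel_measurable M"
  unfolding cis_conv_exp by measurable

lemma matrix_inv_eqI:
  fixes A B :: "'a::comm_ring_1^'n^'n"
  assumes "A ** B = mat 1" "B ** A = mat 1"
  shows "matrix_inv A = B"
proof -
  have "\<exists>A'. A ** A' = mat 1 \<and> A' ** A = mat 1" using assms by blast
  then have C: "A ** matrix_inv A = mat 1 \<and> matrix_inv A ** A = mat 1"
    unfolding matrix_inv_def by (rule someI_ex)
  have "matrix_inv A = matrix_inv A ** (A ** B)" using assms by (simp add: matrix_mul_rid)
  also have "\<dots> = B" using C by (simp add: matrix_mul_assoc matrix_mul_lid)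
  finally show ?thesis .
qed

lemma matrix_inv_gramA:
  assumes "d = 1 - \<alpha> * cnj \<alpha>" "d \<noteq> 0"
  shows "matrix_inv (gramA \<alpha>) = vector [vector [1/d, -\<alpha>/d], vector [- cnj \<alpha>/d, 1/d]]"
  by (rule matrix_inv_eqI)
    (use assms in \<open>auto simp: gramA_def matrix_matrix_mult_def mat_def vec_eq_iff forall_2 sum_2 field_simps\<close>)

lemma cinner2_inv_gramA:
  assumes "d = 1 - \<alpha> * cnj \<alpha>" "d \<noteq> 0"
  shows "cinner2 (matrix_inv (gramA \<alpha>) *v vector [u1, u2]) (vector [u1, u2])
     = ((u1 - \<alpha> * u2) * cnj u1 + (u2 - cnj \<alpha> * u1) * cnj u2) / d"
  using assms by (simp add: matrix_inv_gramA cinner2_def matrix_vector_mult_def sum_2 field_simps)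

lemma sum_indicator_progression_le_1:
  fixes a y j :: real
  assumes a: "\<bar>a\<bar> \<ge> 1"
  shows "(\<Sum>n\<in>{1..N::nat}. indicator {j..<j+1} (real n * a + y)) \<le> (1::real)"
proof -
  define S where "S = {n \<in> {1..N}. real n * a + y \<in> {j..<j+1}}"
  have "card S \<le> Suc 0"
  proof (subst card_le_Suc0_iff_eq, simp add: S_def, intro ballI)
    fix n m assume "n \<in> S" "m \<in> S"
    then have "\<bar>(real n - real m) * a\<bar> < 1" by (auto simp: S_def algebra_simps abs_less_iff)
    moreover have "\<bar>real n - real m\<bar> \<le> \<bar>(real n - real m) * a\<bar>"
      using a by (simp add: abs_mult mult_le_cancel_left1)
    ultimately show "n = m" by linarith
  qed
  moreover have "(\<Sum>n\<in>{1..N::nat}. indicator {j..<j+1} (real n * a + y)) = real (card S)"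
    unfolding S_def indicator_def by (simp add: sum.If_cases Int_def)
  ultimately show ?thesis by simp
qed

lemma sum_integral_translates_le:
  fixes T :: "real \<Rightarrow> real" and c j :: real
  assumes T: "integrable lborel T" "\<And>x. T x \<ge> 0" and c: "\<bar>c\<bar> \<ge> 1"
  shows "(\<Sum>n\<in>{1..N}. \<integral>x. T (x + real n * c) * indicator {j..<j+1} x \<partial>lborel) \<le> (\<integral>x. T x \<partial>lborel)"
proof -
  define I where "I n = {j + real n * c..<j + 1 + real n * c}" for n :: nat
  have shift: "(\<integral>x. T (x + s) * indicator {j..<j+1} x \<partial>lborel)
      = (\<integral>y. T y * indicator {j + s..<j + 1 + s} y \<partial>lborel)" for s
    using lborel_integral_real_affine[of 1 "\<lambda>x. T (x + s) * indicator {j..<j+1} x" "-s"]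
    by (simp add: algebra_simps indicator_def)
  have "(\<Sum>n\<in>{1..N}. \<integral>x. T (x + real n * c) * indicator {j..<j+1} x \<partial>lborel)
      = (\<integral>y. (\<Sum>n\<in>{1..N}. T y * indicator (I n) y) \<partial>lborel)"
    unfolding shift I_def
    by (subst integral_sum') (auto intro!: integrable_real_mult_indicator T simp: simp_implies_def)
  also have "\<dots> \<le> (\<integral>x. T x \<partial>lborel)"
  proof (rule integral_mono)
    show "integrable lborel (\<lambda>y. \<Sum>n\<in>{1..N}. T y * indicator (I n) y)"
      by (intro Bochner_Integration.integrable_sum integrable_real_mult_indicator T) (auto simp: I_def)
    fix y
    have "(\<Sum>n\<in>{1..N}. indicator {j..<j+1} (real n * (-c) + y)) \<le> (1::real)"
      by (rule sum_indicator_progression_le_1) (use c in simp)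
    also have "(\<Sum>n\<in>{1..N}. indicator {j..<j+1} (real n * (-c) + y)) = (\<Sum>n\<in>{1..N}. indicator (I n) y :: real)"
      by (intro sum.cong) (auto simp: I_def indicator_def)
    finally have le_1: "(\<Sum>n\<in>{1..N}. indicator (I n) y) \<le> (1::real)" .
    show "(\<Sum>n\<in>{1..N}. T y * indicator (I n) y) \<le> T y"
      using mult_left_mono[OF le_1 T(2)[of y]] by (simp add: sum_distrib_left)
  qed (use T in auto)
  finally show ?thesis .
qed

lemma mult_interval_integral_le_if_dominated_by_translates:
  fixes T :: "real \<Rightarrow> real"
  assumes T: "integrable lborel T" "\<And>x. T x \<ge> 0" and a: "\<bar>a\<bar> \<ge> 1"
    and dom: "AE x in lborel. \<forall>n. T x \<le> T (x - real n * a) + T (x + real n * a)"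
  shows "real N * (\<integral>x. T x * indicator {j..<j+1} x \<partial>lborel) \<le> 2 * (\<integral>x. T x \<partial>lborel)"
proof -
  define S where "S = (\<integral>x. T x * indicator {j..<j+1} x \<partial>lborel)"
  define L where "L c n = (\<integral>x. T (x + real n * c) * indicator {j..<j+1} x \<partial>lborel)" for c n
  have int_shift: "integrable lborel (\<lambda>x. T (x + s) * indicator {j..<j+1} x)" for s
    using lborel_integrable_real_affine[OF T(1), of 1 s]
    by (intro integrable_real_mult_indicator) (auto simp: add.commute)
  have "S \<le> L (-a) n + L a n" for n
    unfolding S_def L_def Bochner_Integration.integral_add[OF int_shift int_shift, symmetric]
  proof (rule integral_mono_AE)
    show "integrable lborel (\<lambda>x. T x * indicator {j..<j+1} x)" using int_shift[of 0] by simp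
    show "AE x in lborel. T x * indicator {j..<j+1} x
        \<le> T (x + real n * (-a)) * indicator {j..<j+1} x + T (x + real n * a) * indicator {j..<j+1} x"
      using dom by eventually_elim (auto simp: indicator_def)
  qed (intro Bochner_Integration.integrable_add int_shift)
  then have "(\<Sum>n\<in>{1..N}. S) \<le> (\<Sum>n\<in>{1..N}. L (-a) n + L a n)"
    by (intro sum_mono)
  also have "\<dots> = (\<Sum>n\<in>{1..N}. L (-a) n) + (\<Sum>n\<in>{1..N}. L a n)"
    by (rule sum.distrib)
  also have "\<dots> \<le> (\<integral>x. T x \<partial>lborel) + (\<integral>x. T x \<partial>lborel)"
    unfolding L_def by (intro add_mono sum_integral_translates_le[OF T]) (use a in auto)
  finally show ?thesis by (simp add: S_def)
qed

lemma AE_zero_if_dominated_by_translates: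
  fixes T :: "real \<Rightarrow> real"
  assumes T: "integrable lborel T" "\<And>x. T x \<ge> 0" and a: "\<bar>a\<bar> \<ge> 1"
    and dom: "AE x in lborel. \<forall>n. T x \<le> T (x - real n * a) + T (x + real n * a)"
  shows "AE x in lborel. T x = 0"
proof -
  have unit_interval: "AE x in lborel. x \<in> {j..<j+1} \<longrightarrow> T x = 0" for j :: real
  proof -
    define S where "S = (\<integral>x. T x * indicator {j..<j+1} x \<partial>lborel)"
    have int_S: "integrable lborel (\<lambda>x. T x * indicator {j..<j+1} x)"
      using T(1) by (intro integrable_real_mult_indicator) auto
    have "S \<ge> 0" unfolding S_def by (intro integral_nonneg_AE AE_I2) (simp add: T)
    moreover obtain N :: nat where "2 * (\<integral>x. T x \<partial>lborel) / S < real N"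
      using reals_Archimedean2 by blast
    moreover have "real N * S \<le> 2 * (\<integral>x. T x \<partial>lborel)"
      unfolding S_def by (rule mult_interval_integral_le_if_dominated_by_translates[OF T a dom])
    ultimately have "S = 0" by (cases "S = 0") (simp_all add: field_simps)
    then have "AE x in lborel. T x * indicator {j..<j+1} x = 0"
      unfolding S_def using int_S by (subst integral_nonneg_eq_0_iff_AE[symmetric]) (auto simp: T)
    then show ?thesis by eventually_elim (auto simp: indicator_def)
  qed
  have "AE x in lborel. \<forall>j::int. x \<in> {real_of_int j..<j+1} \<longrightarrow> T x = 0"
    using unit_interval by (subst AE_all_countable) auto
  then show ?thesis by eventually_elim (metis atLeastLessThan_iff floor_correct)
qed

lemma AE_dominated_by_translates_if_periodic_factor:
  fixes T \<phi> :: "real \<Rightarrow> real"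
  assumes [measurable]: "T \<in> borel_measurable borel" "\<phi> \<in> borel_measurable borel"
    and T: "\<And>x. T x \<ge> 0" and \<phi>: "\<And>x. \<phi> x \<ge> 0"
    and per: "\<And>x. \<phi> (x + a) = \<phi> x"
    and rel: "AE x in lborel. T (x - a) = \<phi> x * T x"
  shows "AE x in lborel. \<forall>n. T x \<le> T (x - real n * a) + T (x + real n * a)"
proof -
  have per_n: "\<phi> (x + real n * a) = \<phi> x" for x n
  proof (induction n)
    case (Suc n)
    have "\<phi> (x + real (Suc n) * a) = \<phi> ((x + real n * a) + a)" by (simp add: algebra_simps)
    then show ?case using per Suc by simp
  qed simp
  have backward: "AE x in lborel. T (x - real n * a) = \<phi> x ^ n * T x" for n
  proof (induction n)
    case (Suc n)
    have "AE x in lborel. T ((- (real n * a) + 1 * x) - a) = \<phi> (- (real n * a) + 1 * x) * T (- (real n * a) + 1 * x)"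
      by (rule AE_borel_affine) (use rel in auto)
    moreover have "\<phi> (x - real n * a) = \<phi> x" for x using per_n[of "x - real n * a" n] by simp
    ultimately show ?case using Suc by (elim AE_mp) (auto intro!: AE_I2 simp: algebra_simps)
  qed simp
  have forward: "AE x in lborel. T x = \<phi> x ^ n * T (x + real n * a)" for n
    using AE_borel_affine[of 1 "\<lambda>x. T (x - real n * a) = \<phi> x ^ n * T x" "real n * a"] backward[of n]
    by (simp add: per_n add.commute)
  have "AE x in lborel. \<forall>n. T (x - real n * a) = \<phi> x ^ n * T x \<and> T x = \<phi> x ^ n * T (x + real n * a)"
    using backward forward by (subst AE_all_countable) (auto intro: AE_conjI)
  then show ?thesis
  proof eventually_elim
    case (elim x)
    show ?case
    proof
      fix n
      consider "1 \<le> \<phi> x" | "\<phi> x \<le> 1" by linarith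
      then show "T x \<le> T (x - real n * a) + T (x + real n * a)"
      proof cases
        case 1
        then have "T x \<le> \<phi> x ^ n * T x" using T[of x] by (simp add: mult_le_cancel_right1 one_le_power)
        then show ?thesis using elim T[of "x + real n * a"] by simp
      next
        case 2
        then have "\<phi> x ^ n * T (x + real n * a) \<le> T (x + real n * a)"
          using T \<phi> by (intro mult_left_le_one_le power_le_one) auto
        then show ?thesis using elim T[of "x - real n * a"] by simp
      qed
    qed
  qed
qed

lemma cis_add_int_period: "cis (2 * pi * (x + of_int k)) = cis (2 * pi * x)"
proof -
  have "cis (2 * pi * of_int k) = 1" by (simp add: cis.ctr complex_eq_iff)
  thus ?thesis by (simp add: distrib_left cis_mult[symmetric])
qed

lemma countable_cis_level_set: "countable {x::real. cis (2 * pi * x) = r}"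
proof (cases "{x::real. cis (2 * pi * x) = r} = {}")
  case False
  then obtain x0 where x0: "cis (2 * pi * x0) = r" by auto
  have "{x::real. cis (2 * pi * x) = r} \<subseteq> range (\<lambda>n::int. x0 + of_int n)"
  proof
    fix x assume "x \<in> {x::real. cis (2 * pi * x) = r}"
    then have "exp (\<i> * complex_of_real (2 * pi * x)) = exp (\<i> * complex_of_real (2 * pi * x0))"
      using x0 by (simp add: cis_conv_exp)
    then obtain n :: int where
      "\<i> * complex_of_real (2 * pi * x) = \<i> * complex_of_real (2 * pi * x0) + (of_int (2 * n) * pi) * \<i>"
      by (auto simp: exp_eq)
    then have "\<i> * complex_of_real (2 * pi * x) = \<i> * complex_of_real (2 * pi * (x0 + n))"
      by (simp add: algebra_simps)
    then have "2 * pi * x = 2 * pi * (x0 + n)"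
      by (simp only: mult_cancel_left of_real_eq_iff complex_i_not_zero simp_thms)
    then show "x \<in> range (\<lambda>n::int. x0 + of_int n)" by auto
  qed
  then show ?thesis by (rule countable_subset) simp
qed simp

lemma AE_poly_cis_nonzero:
  fixes p :: "complex poly"
  assumes "p \<noteq> 0"
  shows "AE x in lborel. poly p (cis (2 * pi * x)) \<noteq> 0"
proof -
  have "{x::real. poly p (cis (2 * pi * x)) = 0} = (\<Union>r\<in>{z. poly p z = 0}. {x. cis (2 * pi * x) = r})"
    by auto
  also have "countable \<dots>"
    using poly_roots_finite[OF assms] by (intro countable_UN countable_finite countable_cis_level_set) auto
  finally have "{x::real. poly p (cis (2 * pi * x)) = 0} \<in> null_sets lborel"
    by (rule countable_imp_null_set_lborel)
  then show ?thesis by (rule AE_I') auto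
qed

lemma AE_cis_trinomial_nonzero:
  fixes c1 c2 c3 :: complex and b :: int
  assumes b: "b \<noteq> 0" "b \<noteq> 1" and nz: "\<not> (c1 = 0 \<and> c2 = 0 \<and> c3 = 0)"
  shows "AE x in lborel. c1 + c2 * cis (2 * pi * x) + c3 * cis (2 * pi * b * x) \<noteq> 0"
proof (cases "b \<ge> 2")
  case True
  define n where "n = nat b"
  have n: "n \<ge> 2" "b = int n" using True by (auto simp: n_def)
  define p where "p = [:c1, c2:] + monom c3 n"
  have "coeff p 0 = c1" "coeff p 1 = c2" "coeff p n = c3"
    using n by (auto simp: p_def coeff_monom coeff_pCons split: nat.split)
  then have p_nz: "p \<noteq> 0" using nz by auto
  have ev: "poly p (cis (2 * pi * x)) = c1 + c2 * cis (2 * pi * x) + c3 * cis (2 * pi * b * x)" for x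
    by (simp add: p_def poly_monom Complex.DeMoivre n algebra_simps)
  show ?thesis using AE_poly_cis_nonzero[OF p_nz] by (simp add: ev)
next
  case False
  define m where "m = nat (-b)"
  have m: "m \<ge> 1" "b = - int m" using False b by (auto simp: m_def)
  define p where "p = monom c1 m + monom c2 (m + 1) + [:c3:]"
  have "coeff p 0 = c3" "coeff p m = c1" "coeff p (m + 1) = c2"
    using m by (auto simp: p_def coeff_monom coeff_pCons split: nat.split)
  then have p_nz: "p \<noteq> 0" using nz by auto
  \<comment> \<open>for negative \<open>b\<close> the trinomial is a Laurent polynomial; multiplying by \<open>cis (2 * pi * m * x)\<close> clears it\<close>
  have ev: "poly p (cis (2 * pi * x))
      = cis (2 * pi * x) ^ m * (c1 + c2 * cis (2 * pi * x) + c3 * cis (2 * pi * b * x))" for x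
  proof -
    have "cis (2 * pi * x) ^ m * cis (2 * pi * b * x) = 1"
      by (simp add: Complex.DeMoivre m cis_mult algebra_simps)
    then show ?thesis by (simp add: p_def poly_monom algebra_simps)
  qed
  show ?thesis using AE_poly_cis_nonzero[OF p_nz] by (simp add: ev)
qed

lemma integral_quadratic_form:
  fixes F :: "'i \<Rightarrow> real \<Rightarrow> complex" and c :: "'i \<Rightarrow> complex"
  assumes "finite I" and int: "\<And>i j. i \<in> I \<Longrightarrow> j \<in> I \<Longrightarrow> integrable lborel (\<lambda>x. F i x * cnj (F j x))"
  shows "(\<integral>x. (\<Sum>i\<in>I. c i * F i x) * cnj (\<Sum>j\<in>I. c j * F j x) \<partial>lborel)
       = (\<Sum>i\<in>I. \<Sum>j\<in>I. c i * cnj (c j) * (\<integral>x. F i x * cnj (F j x) \<partial>lborel))"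
proof -
  have "(\<Sum>i\<in>I. c i * F i x) * cnj (\<Sum>j\<in>I. c j * F j x) =
      (\<Sum>i\<in>I. \<Sum>j\<in>I. c i * cnj (c j) * (F i x * cnj (F j x)))" for x
    by (simp add: cnj_sum sum_product mult_ac)
  then show ?thesis
    using assms by (simp add: Bochner_Integration.integral_sum Bochner_Integration.integrable_sum)
qed

lemma sum_quadratic_form_3:
  "(\<Sum>i\<in>{0,1,2::nat}. \<Sum>j\<in>{0,1,2::nat}. c i * cnj (c j) * T i j) =
    c 0 * cnj (c 0) * T 0 0 + c 0 * cnj (c 1) * T 0 1 + c 0 * cnj (c 2) * T 0 2
  + c 1 * cnj (c 0) * T 1 0 + c 1 * cnj (c 1) * T 1 1 + c 1 * cnj (c 2) * T 1 2
  + c 2 * cnj (c 0) * T 2 0 + c 2 * cnj (c 1) * T 2 1 + c 2 * cnj (c 2) * T 2 2"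
  by (simp add: algebra_simps)

text \<open>The quadratic form \<open>c\<^sup>* M c\<close>, expanded as in \<open>sum_quadratic_form_3\<close>, of
  \<open>M = [[1, \<alpha>, u1], [\<beta>, 1, u2], [v1, v2, 1]]\<close> at \<open>c = (-(v1 - \<beta> v2)/d, -(v2 - \<alpha> v1)/d, 1)\<close>.\<close>

lemma gram_residual_identity:
  fixes \<alpha> \<beta> u1 u2 v1 v2 d :: complex
  assumes "d \<noteq> 0" "d = 1 - \<alpha> * \<beta>"
  shows "(-(v1 - \<beta> * v2)/d) * (-(u1 - \<alpha> * u2)/d) * 1 + (-(v1 - \<beta> * v2)/d) * (-(u2 - \<beta> * u1)/d) * \<alpha>
       + (-(v1 - \<beta> * v2)/d) * 1 * u1
       + (-(v2 - \<alpha> * v1)/d) * (-(u1 - \<alpha> * u2)/d) * \<beta> + (-(v2 - \<alpha> * v1)/d) * (-(u2 - \<beta> * u1)/d) * 1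
       + (-(v2 - \<alpha> * v1)/d) * 1 * u2
       + 1 * (-(u1 - \<alpha> * u2)/d) * v1 + 1 * (-(u2 - \<beta> * u1)/d) * v2 + 1 * 1 * 1
     = 1 - ((u1 - \<alpha> * u2) * v1 + (u2 - \<beta> * u1) * v2) / d"
proof -
  have "inverse d * (1 - \<alpha> * \<beta>) = 1" using assms by simp
  then show ?thesis unfolding divide_inverse by algebra
qed

definition gabor_triple :: "(real \<Rightarrow> real) \<Rightarrow> real \<Rightarrow> real \<Rightarrow> nat \<Rightarrow> real \<Rightarrow> complex" where
  "gabor_triple g a b i x =
    (if i = 0 then of_real (g x)
     else if i = 1 then cis (2 * pi * x) * of_real (g x)
     else cis (2 * pi * b * x) * of_real (g (x - a)))"

locale unit_window =
  fixes g :: "real \<Rightarrow> real"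
  assumes g_measurable: "g \<in> borel_measurable lborel"
    and square_integrable: "integrable lborel (\<lambda>x. (g x)\<^sup>2)"
    and norm_eq_1: "(\<integral>x. (g x)\<^sup>2 \<partial>lborel) = 1"
begin

abbreviation G :: "real \<Rightarrow> complex" where "G \<equiv> (\<lambda>t. of_real (g t))"

lemma g_borel_measurable [measurable]: "g \<in> borel_measurable borel"
  using g_measurable by simp

lemma integrable_square_shift: "integrable lborel (\<lambda>x. (g (x - s))\<^sup>2)"
  using lborel_integrable_real_affine[OF square_integrable, of 1 "-s"] by simp

lemma integral_square_shift: "(\<integral>x. (g (x - s))\<^sup>2 \<partial>lborel) = 1"
  using lborel_integral_real_affine[of 1 "\<lambda>x. (g x)\<^sup>2" "-s"] norm_eq_1 by simp

lemma not_AE_mult_eq_0: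
  assumes "AE x in lborel. p x \<noteq> 0" and "AE x in lborel. p x * G x = 0"
  shows False
proof -
  have "AE x in lborel. (g x)\<^sup>2 = 0" using assms by eventually_elim simp
  then have "(\<integral>x. (g x)\<^sup>2 \<partial>lborel) = 0" by (rule integral_eq_zero_AE)
  then show False using norm_eq_1 by simp
qed

lemma translate_coefficient_eq_0:
  fixes a b :: int and c1 c2 c3 :: complex
  assumes "a \<noteq> 0"
    and eq: "AE x in lborel. c1 * G x + c2 * cis (2 * pi * x) * G x
                + c3 * cis (2 * pi * of_int b * x) * G (x - of_int a) = 0"
  shows "c3 = 0"
proof (rule ccontr)
  assume c3: "c3 \<noteq> 0"
  define \<phi> where "\<phi> x = (cmod (c1 + c2 * cis (2 * pi * x)))\<^sup>2 / (cmod c3)\<^sup>2" for x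
  have [measurable]: "\<phi> \<in> borel_measurable borel" unfolding \<phi>_def by measurable
  have "AE x in lborel. (g (x - of_int a))\<^sup>2 = \<phi> x * (g x)\<^sup>2"
    using eq
  proof eventually_elim
    case (elim x)
    have "c3 * cis (2 * pi * of_int b * x) * G (x - of_int a) = - ((c1 + c2 * cis (2 * pi * x)) * G x)"
      using elim by (simp add: algebra_simps add_eq_0_iff)
    then have "cmod c3 * \<bar>g (x - of_int a)\<bar> = cmod (c1 + c2 * cis (2 * pi * x)) * \<bar>g x\<bar>"
      by (metis norm_minus_cancel norm_mult norm_cis norm_of_real mult_1_right)
    then have "(cmod c3)\<^sup>2 * (g (x - of_int a))\<^sup>2 = (cmod (c1 + c2 * cis (2 * pi * x)))\<^sup>2 * (g x)\<^sup>2"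
      by (metis power2_abs power_mult_distrib)
    then show ?case using c3 by (simp add: \<phi>_def field_simps)
  qed
  then have "AE x in lborel. \<forall>n. (g x)\<^sup>2 \<le> (g (x - real n * of_int a))\<^sup>2 + (g (x + real n * of_int a))\<^sup>2"
    by (intro AE_dominated_by_translates_if_periodic_factor[where \<phi> = \<phi>])
       (auto simp: \<phi>_def cis_add_int_period)
  then have "AE x in lborel. (g x)\<^sup>2 = 0"
    using \<open>a \<noteq> 0\<close> by (intro AE_zero_if_dominated_by_translates square_integrable) auto
  then show False using not_AE_mult_eq_0[of "\<lambda>_. 1"] by (auto elim: AE_mp)
qed

lemma gabor_triple_independent:
  fixes a b :: int and c1 c2 c3 :: complex
  assumes ab: "(a, b) \<notin> {(0, 0), (0, 1)}"
    and eq: "AE x in lborel. c1 * G x + c2 * cis (2 * pi * x) * G x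
                + c3 * cis (2 * pi * of_int b * x) * G (x - of_int a) = 0"
  shows "c1 = 0 \<and> c2 = 0 \<and> c3 = 0"
proof (rule ccontr)
  assume nz: "\<not> (c1 = 0 \<and> c2 = 0 \<and> c3 = 0)"
  show False
  proof (cases "a = 0")
    case True
    then have "b \<noteq> 0" "b \<noteq> 1" using ab by auto
    from AE_cis_trinomial_nonzero[OF this nz] show False
      by (rule not_AE_mult_eq_0) (use eq True in \<open>simp add: algebra_simps\<close>)
  next
    case False
    then have "c3 = 0" using translate_coefficient_eq_0 eq by blast
    with nz have "\<not> (c1 = 0 \<and> c2 = 0 \<and> 0 = (0::complex))" by simp
    from AE_cis_trinomial_nonzero[of 2, OF _ _ this] show False
      by (rule not_AE_mult_eq_0) (use eq \<open>c3 = 0\<close> in \<open>simp_all add: algebra_simps\<close>)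
  qed
qed

lemma gabor_triple_measurable [measurable]: "gabor_triple g a b i \<in> borel_measurable borel"
  unfolding gabor_triple_def by measurable

lemma integrable_gabor_triple_product:
  "integrable lborel (\<lambda>x. gabor_triple g a b i x * cnj (gabor_triple g a b j x))"
proof (rule Bochner_Integration.integrable_bound)
  define s where "s k = (if k = 0 \<or> k = 1 then 0 else a)" for k :: nat
  show "integrable lborel (\<lambda>x. (g (x - s i))\<^sup>2 + (g (x - s j))\<^sup>2)"
    by (intro Bochner_Integration.integrable_add integrable_square_shift)
  show "AE x in lborel. norm (gabor_triple g a b i x * cnj (gabor_triple g a b j x))
      \<le> norm ((g (x - s i))\<^sup>2 + (g (x - s j))\<^sup>2)"
  proof (rule AE_I2)
    fix x
    have "norm (gabor_triple g a b i x * cnj (gabor_triple g a b j x)) = \<bar>g (x - s i)\<bar> * \<bar>g (x - s j)\<bar>"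
      by (simp add: gabor_triple_def s_def norm_mult)
    also have "\<dots> \<le> (g (x - s i))\<^sup>2 + (g (x - s j))\<^sup>2"
      using sum_squares_bound[of "\<bar>g (x - s i)\<bar>" "\<bar>g (x - s j)\<bar>"]
        mult_nonneg_nonneg[OF abs_ge_zero abs_ge_zero, of "g (x - s i)" "g (x - s j)"]
      by (simp only: mult.assoc power2_abs)
    finally show "norm (gabor_triple g a b i x * cnj (gabor_triple g a b j x))
        \<le> norm ((g (x - s i))\<^sup>2 + (g (x - s j))\<^sup>2)" by simp
  qed
qed measurable

definition gram :: "real \<Rightarrow> real \<Rightarrow> nat \<Rightarrow> nat \<Rightarrow> complex" where
  "gram a b i j = (\<integral>x. gabor_triple g a b i x * cnj (gabor_triple g a b j x) \<partial>lborel)"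

lemma gram_swap: "gram a b j i = cnj (gram a b i j)"
  unfolding gram_def Bochner_Integration.integral_cnj[symmetric] by (simp add: mult.commute)

lemma gram_diagonal: "i \<le> 2 \<Longrightarrow> gram a b i i = 1"
proof -
  assume "i \<le> 2"
  define s where "s = (if i = 2 then a else 0)"
  have "gram a b i i = (\<integral>x. complex_of_real ((g (x - s))\<^sup>2) \<partial>lborel)"
    unfolding gram_def using \<open>i \<le> 2\<close>
    by (intro arg_cong[where f = "integral\<^sup>L lborel"] ext)
       (auto simp: gabor_triple_def s_def power2_eq_square cis_cnj cis_mult)
  also have "\<dots> = complex_of_real (\<integral>x. (g (x - s))\<^sup>2 \<partial>lborel)" by (rule integral_complex_of_real)
  also have "\<dots> = 1" by (simp add: integral_square_shift)
  finally show ?thesis .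
qed

lemma gram_0_1: "gram a b 0 1 = stft G G 0 1"
  unfolding gram_def stft_def by (intro arg_cong[where f = "integral\<^sup>L lborel"] ext)
    (simp add: gabor_triple_def cis_cnj mult_ac)

lemma gram_0_2: "gram a b 0 2 = stft G G a b"
  unfolding gram_def stft_def by (intro arg_cong[where f = "integral\<^sup>L lborel"] ext)
    (simp add: gabor_triple_def cis_cnj mult_ac)

lemma gram_1_2: "gram a b 1 2 = stft G G a (b - 1)"
  unfolding gram_def stft_def
proof (intro arg_cong[where f = "integral\<^sup>L lborel"] ext)
  fix x
  have "cis (2 * pi * x) * cis (- (2 * pi * b * x)) = cis (- 2 * pi * (b - 1) * x)"
    by (simp add: cis_mult algebra_simps)
  then show "gabor_triple g a b 1 x * cnj (gabor_triple g a b 2 x)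
      = G x * cnj (G (x - a)) * cis (- 2 * pi * (b - 1) * x)"
    by (simp add: gabor_triple_def cis_cnj)
qed

lemma gram_form_eq_norm_square:
  obtains N where "N \<ge> 0"
    "(\<Sum>i\<in>{0,1,2::nat}. \<Sum>j\<in>{0,1,2::nat}. c i * cnj (c j) * gram a b i j) = complex_of_real N"
    "N = 0 \<Longrightarrow> AE x in lborel. (\<Sum>i\<in>{0,1,2::nat}. c i * gabor_triple g a b i x) = 0"
proof -
  define h where "h x = (\<Sum>i\<in>{0,1,2::nat}. c i * gabor_triple g a b i x)" for x
  define N where "N = (\<integral>x. (cmod (h x))\<^sup>2 \<partial>lborel)"
  have sq: "h x * cnj (h x) = complex_of_real ((cmod (h x))\<^sup>2)" for x
    by (rule complex_norm_square[symmetric])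
  have "h x * cnj (h x) = (\<Sum>i\<in>{0,1,2::nat}. \<Sum>j\<in>{0,1,2::nat}.
      c i * cnj (c j) * (gabor_triple g a b i x * cnj (gabor_triple g a b j x)))" for x
    unfolding h_def cnj_sum sum_product complex_cnj_mult by (intro sum.cong refl) (simp add: mult_ac)
  then have "integrable lborel (\<lambda>x. h x * cnj (h x))"
    by (simp add: Bochner_Integration.integrable_sum integrable_gabor_triple_product)
  then have int_N: "integrable lborel (\<lambda>x. (cmod (h x))\<^sup>2)"
    using integrable_Re by (fastforce simp: sq)
  have "(\<Sum>i\<in>{0,1,2::nat}. \<Sum>j\<in>{0,1,2::nat}. c i * cnj (c j) * gram a b i j)
      = (\<integral>x. h x * cnj (h x) \<partial>lborel)"
    unfolding h_def gram_def by (rule integral_quadratic_form[symmetric]) (auto intro: integrable_gabor_triple_product)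
  also have "\<dots> = complex_of_real N"
    unfolding sq N_def by (rule integral_complex_of_real)
  moreover have "N \<ge> 0" unfolding N_def by (intro integral_nonneg_AE AE_I2) simp
  moreover have "AE x in lborel. h x = 0" if "N = 0"
  proof -
    have "AE x in lborel. (cmod (h x))\<^sup>2 = 0"
      using that int_N unfolding N_def by (subst (asm) integral_nonneg_eq_0_iff_AE) auto
    then show ?thesis by eventually_elim simp
  qed
  ultimately show ?thesis by (intro that[of N]) (simp_all add: h_def)
qed

abbreviation \<alpha> :: complex where "\<alpha> \<equiv> stft G G 0 1"

lemma gram_determinant_pos: "\<exists>D>0. 1 - \<alpha> * cnj \<alpha> = complex_of_real D"
proof -
  define c :: "nat \<Rightarrow> complex" where "c i = (if i = 0 then - cnj \<alpha> else if i = 1 then 1 else 0)" for i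
  \<comment> \<open>the third atom gets coefficient \<open>0\<close>, so the shift \<open>(1, 0)\<close> is an arbitrary choice\<close>
  obtain N where N: "N \<ge> 0"
      "(\<Sum>i\<in>{0,1,2::nat}. \<Sum>j\<in>{0,1,2::nat}. c i * cnj (c j) * gram 1 0 i j) = complex_of_real N"
      "N = 0 \<Longrightarrow> AE x in lborel. (\<Sum>i\<in>{0,1,2::nat}. c i * gabor_triple g 1 0 i x) = 0"
    using gram_form_eq_norm_square[where c = c and a = 1 and b = 0] by blast
  have "(\<Sum>i\<in>{0,1,2::nat}. \<Sum>j\<in>{0,1,2::nat}. c i * cnj (c j) * gram 1 0 i j) = 1 - \<alpha> * cnj \<alpha>"
    unfolding sum_quadratic_form_3 using gram_swap[of 1 0 1 0] gram_0_1[of 1 0]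
    by (simp add: c_def gram_diagonal algebra_simps)
  moreover have "N \<noteq> 0"
  proof
    assume "N = 0"
    have "AE x in lborel. - cnj \<alpha> * G x + 1 * cis (2 * pi * x) * G x
                + 0 * cis (2 * pi * of_int 0 * x) * G (x - of_int 1) = 0"
      using N(3)[OF \<open>N = 0\<close>] by eventually_elim (simp add: c_def gabor_triple_def)
    from gabor_triple_independent[OF _ this] show False by simp
  qed
  ultimately show ?thesis using N by auto
qed

lemma Ffun_eq:
  assumes "d = 1 - \<alpha> * cnj \<alpha>" "d \<noteq> 0"
  shows "Ffun g a b = ((stft G G a b - \<alpha> * stft G G a (b - 1)) * cnj (stft G G a b)
      + (stft G G a (b - 1) - cnj \<alpha> * stft G G a b) * cnj (stft G G a (b - 1))) / d"
  unfolding Ffun_def uvec_def Let_def by (rule cinner2_inv_gramA[OF assms])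

lemma Ffun_0_0: "Ffun g 0 0 = 1" and Ffun_0_1: "Ffun g 0 1 = 1"
proof -
  have gram_2: "gram 0 0 i 2 = gram 0 0 i 0" for i
    by (simp add: gram_def gabor_triple_def)
  have "stft G G 0 0 = 1"
    using gram_0_2[of 0 0] gram_2[of 0] gram_diagonal[of 0 0 0] by simp
  moreover have "stft G G 0 (- 1) = cnj \<alpha>"
    using gram_1_2[of 0 0] gram_2[of 1] gram_swap[of 0 0 1 0] gram_0_1[of 0 0] by simp
  moreover have d: "1 - \<alpha> * cnj \<alpha> \<noteq> 0" using gram_determinant_pos by force
  ultimately show "Ffun g 0 0 = 1" "Ffun g 0 1 = 1"
    by (simp_all add: Ffun_eq[OF refl d] field_simps)
qed

lemma Ffun_eq_1_minus_residual:
  obtains N c where "N \<ge> 0" "Ffun g a b = complex_of_real (1 - N)" "c 2 = 1"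
    "N = 0 \<Longrightarrow> AE x in lborel. (\<Sum>i\<in>{0,1,2::nat}. c i * gabor_triple g a b i x) = 0"
proof -
  obtain D where D: "D > 0" "1 - \<alpha> * cnj \<alpha> = complex_of_real D" using gram_determinant_pos by blast
  define d where "d = complex_of_real D"
  have d: "d \<noteq> 0" "d = 1 - \<alpha> * cnj \<alpha>" "cnj d = d" using D by (simp_all add: d_def)
  define u1 where "u1 = stft G G a b"
  define u2 where "u2 = stft G G a (b - 1)"
  \<comment> \<open>\<open>c\<close> removes from the third Gabor atom its projection onto the span of the first two\<close>
  define c :: "nat \<Rightarrow> complex" where
    "c i = (if i = 0 then -(cnj u1 - cnj \<alpha> * cnj u2) / d else if i = 1 then -(cnj u2 - \<alpha> * cnj u1) / d else 1)" for i
  obtain N where N: "N \<ge> 0"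
      "(\<Sum>i\<in>{0,1,2::nat}. \<Sum>j\<in>{0,1,2::nat}. c i * cnj (c j) * gram a b i j) = complex_of_real N"
      "N = 0 \<Longrightarrow> AE x in lborel. (\<Sum>i\<in>{0,1,2::nat}. c i * gabor_triple g a b i x) = 0"
    using gram_form_eq_norm_square[where c = c and a = a and b = b] by blast
  have c: "c 0 = -(cnj u1 - cnj \<alpha> * cnj u2) / d" "c 1 = -(cnj u2 - \<alpha> * cnj u1) / d" "c 2 = 1"
    by (simp_all add: c_def)
  have cnj_c: "cnj (c 0) = -(u1 - \<alpha> * u2) / d" "cnj (c 1) = -(u2 - cnj \<alpha> * u1) / d" "cnj (c 2) = 1"
    by (simp_all add: c_def d)
  have gram_entries: "gram a b 0 0 = 1" "gram a b 1 1 = 1" "gram a b 2 2 = 1"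
    "gram a b 0 1 = \<alpha>" "gram a b 0 2 = u1" "gram a b 1 2 = u2"
    "gram a b 1 0 = cnj \<alpha>" "gram a b 2 0 = cnj u1" "gram a b 2 1 = cnj u2"
    using gram_0_1[of a b] gram_0_2[of a b] gram_1_2[of a b]
      gram_swap[of a b 1 0] gram_swap[of a b 2 0] gram_swap[of a b 2 1]
    by (simp_all add: gram_diagonal u1_def u2_def)
  have "(\<Sum>i\<in>{0,1,2::nat}. \<Sum>j\<in>{0,1,2::nat}. c i * cnj (c j) * gram a b i j)
      = 1 - ((u1 - \<alpha> * u2) * cnj u1 + (u2 - cnj \<alpha> * u1) * cnj u2) / d"
    unfolding sum_quadratic_form_3 cnj_c unfolding c gram_entries by (rule gram_residual_identity[OF d(1,2)])
  then have "1 - Ffun g a b = complex_of_real N"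
    unfolding Ffun_eq[OF d(2,1)] u1_def[symmetric] u2_def[symmetric] N(2)[symmetric] ..
  then have "Ffun g a b = complex_of_real (1 - N)" by (simp add: algebra_simps)
  then show ?thesis using N by (intro that[of N c]) (simp_all add: c_def)
qed

lemma Ffun_lt_1:
  fixes a b :: int
  assumes "(a, b) \<notin> {(0, 0), (0, 1)}"
  shows "Ffun g a b \<in> \<real> \<and> Re (Ffun g a b) < 1"
proof -
  obtain N c where N: "N \<ge> 0" "Ffun g a b = complex_of_real (1 - N)" "c 2 = 1"
      "N = 0 \<Longrightarrow> AE x in lborel. (\<Sum>i\<in>{0,1,2::nat}. c i * gabor_triple g a b i x) = 0"
    using Ffun_eq_1_minus_residual[where a = a and b = b] by blast
  have "N \<noteq> 0"
  proof
    assume "N = 0"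
    have "AE x in lborel. c 0 * G x + c 1 * cis (2 * pi * x) * G x
                + c 2 * cis (2 * pi * of_int b * x) * G (x - of_int a) = 0"
      using N(4)[OF \<open>N = 0\<close>] by eventually_elim (simp add: gabor_triple_def mult.assoc add.assoc)
    from gabor_triple_independent[OF assms this] show False using N(3) by simp
  qed
  then show ?thesis using N by simp
qed

end

theorem proposition2p5:
  fixes g :: "real \<Rightarrow> real"
  assumes meas: "g \<in> borel_measurable lborel"
    and L2: "integrable lborel (\<lambda>x. (g x)\<^sup>2)"
    and norm1: "(\<integral>x. (g x)\<^sup>2 \<partial>lborel) = 1"
  shows "Ffun g 0 0 = 1 \<and> Ffun g 0 1 = 1
    \<and> (\<forall>a b :: int. (a, b) \<notin> {(0, 0), (0, 1)} \<longrightarrow>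
          Ffun g (of_int a) (of_int b) \<in> \<real> \<and> Re (Ffun g (of_int a) (of_int b)) < 1)
    \<and> (\<forall>a b :: int. (a, b) \<notin> {(0, 0), (0, 1)} \<longrightarrow>
          (\<forall>c1 c2 c3 :: complex.
             (AE x in lborel. c1 * of_real (g x) + c2 * cis (2 * pi * x) * of_real (g x)
                + c3 * cis (2 * pi * of_int b * x) * of_real (g (x - of_int a)) = 0)
             \<longrightarrow> c1 = 0 \<and> c2 = 0 \<and> c3 = 0))"
proof -
  interpret unit_window g using assms by unfold_locales
  show ?thesis using Ffun_0_0 Ffun_0_1 Ffun_lt_1 gabor_triple_independent by blast
qed

end
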